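(* Assume there is $\delta>0$ such that $\alpha\big(\{((p_i)_{i\in\mathbb N_0},h)\in\Omega: p_1=1\}\big)<1$ and $\alpha\big(\{((p_i)_{i\in\mathbb N_0},h)\in\Omega: p_0\le 1-\delta,\ h\in[\delta,1]\}\big)=1$. Then either there is Local Survival for $\mathsf P$-a.e. $\omega$, or there is no Local Survival for $\mathsf P$-a.e. $\omega$. Moreover, there is Local Survival for $\mathsf P$-a.e. $\omega$ if and only if $\Lambda>1$.
   Context: Let $\mathcal M$ be the set of probability measures $(p_i)_{i\in\mathbb N_0}$ on $\mathbb N_0$ (offspring distributions) and $\Omega=\mathcal M\times(0,1]$. Let $\alpha$ be a probability measure on $\Omega$. A random environment $\omega=(\omega_x)_{x\in\mathbb N_0}=(\mu_x,h_x)_{x\in\mathbb N_0}$ is an i.i.d. sequence with law $\alpha$; write $\mathsf P=\alpha^{\otimes\mathbb N_0}$ and $\mathsf E$ for its expectation. Let $m_x=\sum_{k\ge0}k\,\mu_x(\{k\})$ be the mean offspring at $x$, $M=\operatorname{ess\,sup} m_0$ and $\Lambda=\operatorname{ess\,sup}\big(m_0(1-h_0)\big)$. Given $\omega$, the branching random walk in random environment on $\mathbb N_0$ evolves in discrete time as follows: at each time step every existing particle at a site $x$ produces offspring according to $\mu_x$, independently of all other particles, and dies; then every newly produced particle independently moves from $x$ to $x+1$ with probability $h_x$ and stays at $x$ with probability $1-h_x$. Let $\eta_n(x)$ be the number of particles at $x$ at time $n$ and $Z_n=\sum_x\eta_n(x)$. $P^x_\omega$, $E^x_\omega$ denote the (quenched)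 law and expectation of the process in environment $\omega$ started with one particle at $x$, and $P_\omega=P^0_\omega$, $E_\omega=E^0_\omega$. Given $\omega$, there is Global Survival (GS) if $P_\omega(Z_n\to0)<1$, and Local Survival (LS) if $P_\omega(\eta_n(x)\to0)<1$ for some $x\in\mathbb N_0$. *)

theory Defs
  imports "HOL-Probability.Probability"
begin

text \<open>A site parameter is a pair (p, h): p the offspring probability vector, h the
  probability of moving to the right. The parameter set Omega:\<close>

type_synonym site = "(nat \<Rightarrow> real) \<times> real"
type_synonym env = "nat \<Rightarrow> site"

definition Omega :: "site set" where
  "Omega = {(p, h). (\<forall>i. 0 \<le> p i) \<and> p sums 1 \<and> 0 < h \<and> h \<le> 1}"

definition offspring :: "(nat \<Rightarrow> real) \<Rightarrow> nat pmf" where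
  "offspring p = embed_pmf p"

definition mean_offspring :: "(nat \<Rightarrow> real) \<Rightarrow> ennreal" where
  "mean_offspring p = (\<Sum>k. ennreal (real k * p k))"

text \<open>Reproduction-and-move step of a single particle at a site with parameter (p, h):
  returns (number of children staying, number of children moving right).\<close>
definition particle_law :: "site \<Rightarrow> (nat \<times> nat) pmf" where
  "particle_law s = bind_pmf (offspring (fst s))
      (\<lambda>L. map_pmf (\<lambda>k. (L - k, k)) (binomial_pmf L (snd s)))"

text \<open>Independent randomness: for every time n, site x and particle label j,
  an independent sample of particle_law (omega x).  Quenched law in environment omega.\<close>
definition noise :: "env \<Rightarrow> (nat \<times> nat \<times> nat \<Rightarrow> nat \<times> nat) measure" where
  "noise \<omega> = (\<Pi>\<^sub>M i\<in>UNIV. measure_pmf (particle_law (\<omega> (fst (snd i)))))"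

text \<open>Particle numbers eta n x, starting with one particle at site 0.
  The particles at site x at time n are labelled 0, ..., eta n x - 1.\<close>
fun eta :: "(nat \<times> nat \<times> nat \<Rightarrow> nat \<times> nat) \<Rightarrow> nat \<Rightarrow> nat \<Rightarrow> nat" where
  "eta \<xi> 0 x = (if x = 0 then 1 else 0)"
| "eta \<xi> (Suc n) x =
     (\<Sum>j<eta \<xi> n x. fst (\<xi> (n, x, j)))
     + (if x = 0 then 0 else (\<Sum>j<eta \<xi> n (x - 1). snd (\<xi> (n, x - 1, j))))"

definition local_survival :: "env \<Rightarrow> bool" where
  "local_survival \<omega> \<longleftrightarrow>
     (\<exists>x. measure (noise \<omega>) {\<xi> \<in> space (noise \<omega>). (\<lambda>n. real (eta \<xi> n x)) \<longlonglongrightarrow> 0} < 1)"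

definition env_law :: "site measure \<Rightarrow> env measure" where
  "env_law \<alpha> = (\<Pi>\<^sub>M x\<in>UNIV. \<alpha>)"

definition Lambda :: "site measure \<Rightarrow> ennreal" where
  "Lambda \<alpha> = esssup \<alpha> (\<lambda>(p, h). mean_offspring p * ennreal (1 - h))"

end

theory Submission
  imports Defs
begin

text \<open>
  The particles that stay at a site \<open>x\<close> form a Galton--Watson process whose offspring generating
  function is \<open>u \<mapsto> F\<^sub>x(h\<^sub>x + (1 - h\<^sub>x) u)\<close>, with \<open>F\<^sub>x\<close> the generating function of \<open>\<mu>\<^sub>x\<close>; its mean is
  \<open>m\<^sub>x (1 - h\<^sub>x)\<close>. Since \<open>h\<^sub>x > 0\<close>, this process is supercritical iff \<open>m\<^sub>x (1 - h\<^sub>x) > 1\<close>; in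
  particular the degenerate case \<open>\<mu>\<^sub>x = \<delta>\<^sub>1\<close> is subcritical.

  If every site is (sub)critical, induction over the sites shows that each site is eventually
  empty: once site \<open>x\<close> is empty, site \<open>x + 1\<close> only evolves by its own local process, which dies out.
  If some site \<open>x\<close> is supercritical and \<open>p\<^sub>0 < 1\<close> everywhere, then with positive probability one
  particle walks straight from \<open>0\<close> to \<open>x\<close>, and independently its local process at \<open>x\<close> survives.

  Hence local survival holds in the environment \<open>\<omega>\<close> iff some site has \<open>m\<^sub>x (1 - h\<^sub>x) > 1\<close>. Under the
  i.i.d. law this happens almost surely if \<open>\<Lambda> > 1\<close> (a set of positive measure is hit by some
  site), and almost never if \<open>\<Lambda> \<le> 1\<close>.
\<close>

section \<open>Independence in infinite products of pmfs\<close>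

abbreviation PiM_pmf :: "('i \<Rightarrow> 'b pmf) \<Rightarrow> ('i \<Rightarrow> 'b) measure" where
  "PiM_pmf D \<equiv> \<Pi>\<^sub>M i\<in>UNIV. measure_pmf (D i)"

lemma space_PiM_pmf [simp]: "space (PiM_pmf D) = UNIV"
  by (auto simp: space_PiM)

lemma prob_space_PiM_pmf: "prob_space (PiM_pmf D)"
  by (intro prob_space_PiM prob_space_measure_pmf)

lemma measurable_PiM_pmf_component [measurable]:
  "(\<lambda>\<xi>. \<xi> i) \<in> PiM_pmf D \<rightarrow>\<^sub>M count_space UNIV"
  using measurable_component_singleton[of i UNIV "\<lambda>i. measure_pmf (D i)"] by simp

lemma sets_PiM_pmf_component [measurable]: "{\<xi>. \<xi> i \<in> X} \<in> sets (PiM_pmf D)"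
  using measurable_sets[OF measurable_PiM_pmf_component[of i D], of X] by (simp add: vimage_def)

lemma borel_measurable_comp_count_space:
  "g \<in> M \<rightarrow>\<^sub>M count_space UNIV \<Longrightarrow> (\<lambda>x. F (g x)) \<in> borel_measurable M"
  by (rule measurable_compose[of g M "count_space UNIV"]) auto

lemma measurable_add_nat:
  fixes f g :: "'a \<Rightarrow> nat"
  assumes "f \<in> M \<rightarrow>\<^sub>M count_space UNIV" "g \<in> M \<rightarrow>\<^sub>M count_space UNIV"
  shows "(\<lambda>x. f x + g x) \<in> M \<rightarrow>\<^sub>M count_space UNIV"
proof -
  have "(\<lambda>x. a + g x) \<in> M \<rightarrow>\<^sub>M count_space UNIV" for a
    by (rule measurable_compose[OF assms(2)]) simp
  then have "(\<lambda>x. (\<lambda>a x. a + g x) (f x) x) \<in> M \<rightarrow>\<^sub>M count_space UNIV"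
    by (rule measurable_compose_countable[OF _ assms(1)])
  then show ?thesis by simp
qed

lemma measurable_sum_components:
  fixes f :: "'b \<Rightarrow> nat" and c :: "nat \<Rightarrow> 'i"
  shows "(\<lambda>\<xi>. \<Sum>j<n. f (\<xi> (c j))) \<in> PiM_pmf D \<rightarrow>\<^sub>M count_space UNIV"
proof (induction n)
  case (Suc n)
  have "(\<lambda>\<xi>. f (\<xi> (c n))) \<in> PiM_pmf D \<rightarrow>\<^sub>M count_space UNIV"
    by (rule measurable_compose[OF measurable_PiM_pmf_component]) simp
  then show ?case
    using measurable_add_nat[OF Suc.IH] by simp
qed simp

lemma measurable_random_sum_components:
  fixes f :: "'b \<Rightarrow> nat" and c :: "nat \<Rightarrow> 'i"
  assumes "N \<in> PiM_pmf D \<rightarrow>\<^sub>M count_space UNIV"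
  shows "(\<lambda>\<xi>. \<Sum>j<N \<xi>. f (\<xi> (c j))) \<in> PiM_pmf D \<rightarrow>\<^sub>M count_space UNIV"
  using measurable_compose_countable[where f = "\<lambda>n \<xi>. \<Sum>j<n. f (\<xi> (c j))",
      OF measurable_sum_components assms] .

definition merge_on :: "'i set \<Rightarrow> ('i \<Rightarrow> 'b) \<Rightarrow> ('i \<Rightarrow> 'b) \<Rightarrow> 'i \<Rightarrow> 'b" where
  "merge_on A a b = (\<lambda>i. if i \<in> A then a i else b i)"

definition depends_only_on :: "'i set \<Rightarrow> (('i \<Rightarrow> 'b) \<Rightarrow> 'c) \<Rightarrow> bool" where
  "depends_only_on A F \<longleftrightarrow> (\<forall>\<xi> \<xi>'. (\<forall>i\<in>A. \<xi> i = \<xi>' i) \<longrightarrow> F \<xi> = F \<xi>')"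

lemma depends_only_on_mono: "A \<subseteq> B \<Longrightarrow> depends_only_on A F \<Longrightarrow> depends_only_on B F"
  unfolding depends_only_on_def by blast

lemma depends_only_on_merge_on_left: "depends_only_on A F \<Longrightarrow> F (merge_on A a b) = F a"
  unfolding depends_only_on_def by (auto simp: merge_on_def)

lemma depends_only_on_merge_on_right: "depends_only_on (- A) F \<Longrightarrow> F (merge_on A a b) = F b"
  unfolding depends_only_on_def by (auto simp: merge_on_def)

lemma measurable_merge_on:
  "(\<lambda>(a, b). merge_on A a b) \<in> PiM_pmf D \<Otimes>\<^sub>M PiM_pmf D \<rightarrow>\<^sub>M PiM_pmf D"
proof -
  have "(\<lambda>(a, b). merge_on A a b) = (\<lambda>\<omega> i. if i \<in> A then fst \<omega> i else snd \<omega> i)"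
    by (auto simp: merge_on_def fun_eq_iff)
  also have "\<dots> \<in> PiM_pmf D \<Otimes>\<^sub>M PiM_pmf D \<rightarrow>\<^sub>M PiM_pmf D"
  proof (rule measurable_PiM_single')
    fix i
    show "(\<lambda>\<omega>. if i \<in> A then fst \<omega> i else snd \<omega> i)
        \<in> PiM_pmf D \<Otimes>\<^sub>M PiM_pmf D \<rightarrow>\<^sub>M measure_pmf (D i)"
      unfolding measurable_pmf_measure2
      by (cases "i \<in> A") (simp_all add: measurable_compose[OF measurable_fst measurable_PiM_pmf_component]
          measurable_compose[OF measurable_snd measurable_PiM_pmf_component])
  qed auto
  finally show ?thesis .
qed

lemma distr_merge_on_PiM_pmf:
  "distr (PiM_pmf D \<Otimes>\<^sub>M PiM_pmf D) (PiM_pmf D) (\<lambda>(a, b). merge_on A a b) = PiM_pmf D"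
proof -
  interpret product_prob_space "\<lambda>i. measure_pmf (D i)" UNIV
    by unfold_locales
  show ?thesis
  proof (rule PiM_eq)
    fix J :: "'a set" and F
    assume J: "finite J" "J \<subseteq> UNIV" and F: "\<And>j. j \<in> J \<Longrightarrow> F j \<in> sets (measure_pmf (D j))"
    define cyl where "cyl K = {a \<in> space (PiM_pmf D). \<forall>j\<in>K. a j \<in> F j}" for K
    have cyl_sets: "cyl K \<in> sets (PiM_pmf D)" if "K \<subseteq> J" for K
      unfolding cyl_def using finite_subset[OF that J(1)]
      by (intro sets.sets_Collect_finite_All) auto
    have cyl_emeasure: "emeasure (PiM_pmf D) (cyl K) = (\<Prod>j\<in>K. emeasure (D j) (F j))"
      if "K \<subseteq> J" for K
      unfolding cyl_def using finite_subset[OF that J(1)] that by (subst emeasure_PiM_Collect) auto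
    have preimage: "(\<lambda>(a, b). merge_on A a b) -` prod_emb UNIV (\<lambda>i. measure_pmf (D i)) J (Pi\<^sub>E J F)
        \<inter> space (PiM_pmf D \<Otimes>\<^sub>M PiM_pmf D) = cyl (J \<inter> A) \<times> cyl (J - A)"
      by (auto simp: prod_emb_def space_pair_measure merge_on_def PiE_iff cyl_def split: if_splits)
    have "emeasure (distr (PiM_pmf D \<Otimes>\<^sub>M PiM_pmf D) (PiM_pmf D) (\<lambda>(a, b). merge_on A a b))
        (prod_emb UNIV (\<lambda>i. measure_pmf (D i)) J (Pi\<^sub>E J F))
      = emeasure (PiM_pmf D \<Otimes>\<^sub>M PiM_pmf D) (cyl (J \<inter> A) \<times> cyl (J - A))"
      unfolding preimage[symmetric] by (rule emeasure_distr[OF measurable_merge_on])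
        (auto intro!: sets_PiM_I_finite J F)
    also have "\<dots> = emeasure (PiM_pmf D) (cyl (J \<inter> A)) * emeasure (PiM_pmf D) (cyl (J - A))"
      by (intro P.emeasure_pair_measure_Times cyl_sets) auto
    also have "\<dots> = (\<Prod>j\<in>J. emeasure (D j) (F j))"
      using J by (simp add: cyl_emeasure, subst prod.union_disjoint[symmetric]) (auto intro!: prod.cong)
    finally show "emeasure (distr (PiM_pmf D \<Otimes>\<^sub>M PiM_pmf D) (PiM_pmf D) (\<lambda>(a, b). merge_on A a b))
        (prod_emb UNIV (\<lambda>i. measure_pmf (D i)) J (Pi\<^sub>E J F)) = (\<Prod>j\<in>J. emeasure (D j) (F j))" .
  qed simp
qed

lemma nn_integral_PiM_pmf_merge_on:
  assumes [measurable]: "\<Phi> \<in> borel_measurable (PiM_pmf D)"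
  shows "(\<integral>\<^sup>+\<xi>. \<Phi> \<xi> \<partial>PiM_pmf D) = (\<integral>\<^sup>+a. \<integral>\<^sup>+b. \<Phi> (merge_on A a b) \<partial>PiM_pmf D \<partial>PiM_pmf D)"
proof -
  interpret product_prob_space "\<lambda>i. measure_pmf (D i)" UNIV
    by unfold_locales
  note merge = measurable_merge_on[of A D]
  have "(\<integral>\<^sup>+\<xi>. \<Phi> \<xi> \<partial>PiM_pmf D)
      = (\<integral>\<^sup>+\<xi>. \<Phi> \<xi> \<partial>distr (PiM_pmf D \<Otimes>\<^sub>M PiM_pmf D) (PiM_pmf D) (\<lambda>(a, b). merge_on A a b))"
    by (simp add: distr_merge_on_PiM_pmf)
  also have "\<dots> = (\<integral>\<^sup>+z. \<Phi> ((\<lambda>(a, b). merge_on A a b) z) \<partial>(PiM_pmf D \<Otimes>\<^sub>M PiM_pmf D))"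
    by (rule nn_integral_distr[OF merge]) simp
  also have "\<dots> = (\<integral>\<^sup>+a. \<integral>\<^sup>+b. \<Phi> (merge_on A a b) \<partial>PiM_pmf D \<partial>PiM_pmf D)"
    by (subst P.nn_integral_fst[symmetric]) (auto intro!: measurable_compose[OF merge])
  finally show ?thesis .
qed

lemma nn_integral_PiM_pmf_indep_mult:
  assumes [measurable]: "F \<in> borel_measurable (PiM_pmf D)" "H \<in> borel_measurable (PiM_pmf D)"
    and "depends_only_on A F" "depends_only_on (- A) H"
  shows "(\<integral>\<^sup>+\<xi>. F \<xi> * H \<xi> \<partial>PiM_pmf D) = (\<integral>\<^sup>+\<xi>. F \<xi> \<partial>PiM_pmf D) * (\<integral>\<^sup>+\<xi>. H \<xi> \<partial>PiM_pmf D)"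
proof -
  have "(\<integral>\<^sup>+\<xi>. F \<xi> * H \<xi> \<partial>PiM_pmf D) = (\<integral>\<^sup>+a. \<integral>\<^sup>+b. F a * H b \<partial>PiM_pmf D \<partial>PiM_pmf D)"
    using assms by (subst nn_integral_PiM_pmf_merge_on[of _ _ A])
      (auto simp: depends_only_on_merge_on_left depends_only_on_merge_on_right)
  also have "\<dots> = (\<integral>\<^sup>+a. F a * (\<integral>\<^sup>+b. H b \<partial>PiM_pmf D) \<partial>PiM_pmf D)"
    by (subst nn_integral_cmult) auto
  also have "\<dots> = (\<integral>\<^sup>+\<xi>. F \<xi> \<partial>PiM_pmf D) * (\<integral>\<^sup>+\<xi>. H \<xi> \<partial>PiM_pmf D)"
    by (subst nn_integral_multc) auto
  finally show ?thesis .
qed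

lemma emeasure_PiM_pmf_indep_Int:
  assumes [measurable]: "E \<in> sets (PiM_pmf D)" "S \<in> sets (PiM_pmf D)"
    and "depends_only_on A (\<lambda>\<xi>. \<xi> \<in> E)" "depends_only_on (- A) (\<lambda>\<xi>. \<xi> \<in> S)"
  shows "emeasure (PiM_pmf D) (E \<inter> S) = emeasure (PiM_pmf D) E * emeasure (PiM_pmf D) S"
proof -
  have "depends_only_on A (indicator E :: _ \<Rightarrow> ennreal)"
    using assms(3) by (auto simp: depends_only_on_def indicator_def)
  moreover have "depends_only_on (- A) (indicator S :: _ \<Rightarrow> ennreal)"
    using assms(4) by (auto simp: depends_only_on_def indicator_def)
  ultimately have "(\<integral>\<^sup>+\<xi>. indicator E \<xi> * indicator S \<xi> \<partial>PiM_pmf D)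
      = (\<integral>\<^sup>+\<xi>. indicator E \<xi> \<partial>PiM_pmf D) * (\<integral>\<^sup>+\<xi>. indicator S \<xi> \<partial>PiM_pmf D)"
    by (intro nn_integral_PiM_pmf_indep_mult) auto
  moreover have "(\<lambda>\<xi>. indicator E \<xi> * indicator S \<xi> :: ennreal) = indicator (E \<inter> S)"
    by (auto simp: fun_eq_iff indicator_def)
  ultimately show ?thesis by simp
qed

lemma nn_integral_PiM_pmf_component:
  "(\<integral>\<^sup>+\<xi>. g (\<xi> i) \<partial>PiM_pmf D) = (\<integral>\<^sup>+z. g z \<partial>measure_pmf (D i))"
proof -
  interpret product_prob_space "\<lambda>i. measure_pmf (D i)" UNIV
    by unfold_locales
  have "(\<integral>\<^sup>+z. g z \<partial>measure_pmf (D i)) = (\<integral>\<^sup>+z. g z \<partial>distr (PiM_pmf D) (D i) (\<lambda>\<xi>. \<xi> i))"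
    by (simp add: PiM_component)
  also have "\<dots> = (\<integral>\<^sup>+\<xi>. g (\<xi> i) \<partial>PiM_pmf D)"
    by (rule nn_integral_distr) auto
  finally show ?thesis ..
qed

lemma nn_integral_PiM_pmf_prod_components:
  fixes c :: "nat \<Rightarrow> 'i" and g :: "'b \<Rightarrow> ennreal"
  assumes "inj c" and "\<And>j. D (c j) = Q"
  shows "(\<integral>\<^sup>+\<xi>. (\<Prod>j<n. g (\<xi> (c j))) \<partial>PiM_pmf D) = (\<integral>\<^sup>+z. g z \<partial>measure_pmf Q) ^ n"
proof (induction n)
  case 0
  then show ?case using prob_space.emeasure_space_1[OF prob_space_PiM_pmf, of D] by simp
next
  case (Suc n)
  have "(\<integral>\<^sup>+\<xi>. (\<Prod>j<Suc n. g (\<xi> (c j))) \<partial>PiM_pmf D)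
      = (\<integral>\<^sup>+\<xi>. (\<Prod>j<n. g (\<xi> (c j))) * g (\<xi> (c n)) \<partial>PiM_pmf D)"
    by simp
  also have "\<dots> = (\<integral>\<^sup>+\<xi>. (\<Prod>j<n. g (\<xi> (c j))) \<partial>PiM_pmf D) * (\<integral>\<^sup>+\<xi>. g (\<xi> (c n)) \<partial>PiM_pmf D)"
  proof (rule nn_integral_PiM_pmf_indep_mult[where A = "- {c n}"])
    show "depends_only_on (- {c n}) (\<lambda>\<xi>. \<Prod>j<n. g (\<xi> (c j)))"
      unfolding depends_only_on_def using assms(1) by (auto intro!: prod.cong simp: inj_eq)
  qed (auto simp: depends_only_on_def intro!: borel_measurable_prod_ennreal
      borel_measurable_comp_count_space[OF measurable_PiM_pmf_component])
  finally show ?case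
    using Suc.IH nn_integral_PiM_pmf_component[where g = g and i = "c n" and D = D] assms(2) by (simp add: mult.commute)
qed

section \<open>Generating functions of a site\<close>

definition offspring_pgf :: "(nat \<Rightarrow> real) \<Rightarrow> real \<Rightarrow> real" where
  "offspring_pgf p t = (\<Sum>L. p L * t ^ L)"

definition particle_pgf :: "site \<Rightarrow> real \<Rightarrow> real \<Rightarrow> real" where
  "particle_pgf s u v = offspring_pgf (fst s) (snd s * v + (1 - snd s) * u)"

definition stay_pgf :: "site \<Rightarrow> real \<Rightarrow> real" where
  "stay_pgf s u = particle_pgf s u 1"

definition stay_mean :: "site \<Rightarrow> ennreal" where
  "stay_mean = (\<lambda>(p, h). mean_offspring p * ennreal (1 - h))"

lemma stay_pgf_eq: "stay_pgf (p, h) u = offspring_pgf p (h + (1 - h) * u)"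
  by (simp add: stay_pgf_def particle_pgf_def)

lemma one_minus_power_le:
  fixes t :: real
  assumes "0 \<le> t"
  shows "1 - t ^ L \<le> real L * (1 - t)"
  using Bernoulli_inequality[of "t - 1" L] assms by (simp add: algebra_simps)

lemma one_minus_power_less:
  fixes t :: real
  assumes t: "0 \<le> t" "t < 1" and L: "2 \<le> L"
  shows "1 - t ^ L < real L * (1 - t)"
proof -
  have "(\<Sum>i<L. t ^ i) < (\<Sum>i<L. 1)"
  proof (rule sum_strict_mono_ex1)
    show "\<forall>i\<in>{..<L}. t ^ i \<le> 1" using t by (auto intro: power_le_one)
    show "\<exists>i\<in>{..<L}. t ^ i < 1" using t L by (intro bexI[of _ 1]) auto
  qed simp
  then have "(1 - t) * (\<Sum>i<L. t ^ i) < (1 - t) * real L"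
    using t by (intro mult_strict_left_mono) auto
  then show ?thesis by (simp add: one_diff_power_eq mult.commute)
qed

lemma tendsto_at_left_1_exceeds:
  fixes g :: "real \<Rightarrow> real"
  assumes "(g \<longlongrightarrow> l) (at_left 1)" "c < l"
  obtains u where "0 < u" "u < 1" "c < g u"
proof -
  have "eventually (\<lambda>u. c < g u) (at_left 1)"
    using order_tendstoD(1)[OF assms] .
  moreover have "eventually (\<lambda>u. u \<in> {0<..<1}) (at_left (1::real))"
    by (rule eventually_at_left_real) simp
  ultimately have "eventually (\<lambda>u. u \<in> {0<..<1} \<and> c < g u) (at_left 1)"
    by (simp add: eventually_conj_iff)
  then have "\<exists>u. u \<in> {0<..<1} \<and> c < g u"
    by (rule eventually_happens'[OF trivial_limit_at_left_real])
  then show ?thesis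
    using that by auto
qed

lemma nn_integral_binomial_pmf_power:
  fixes h u v :: real
  assumes "0 \<le> h" "h \<le> 1" "0 \<le> u" "0 \<le> v"
  shows "(\<integral>\<^sup>+k. ennreal (u ^ (L - k) * v ^ k) \<partial>binomial_pmf L h) = ennreal ((h * v + (1 - h) * u) ^ L)"
proof -
  have "(\<integral>\<^sup>+k. ennreal (u ^ (L - k) * v ^ k) \<partial>binomial_pmf L h)
      = (\<Sum>k\<le>L. ennreal (u ^ (L - k) * v ^ k) * pmf (binomial_pmf L h) k)"
    using assms by (intro nn_integral_measure_pmf_support) (auto simp: set_pmf_binomial_eq split: if_splits)
  also have "\<dots> = (\<Sum>k\<le>L. ennreal (real (L choose k) * (h * v) ^ k * ((1 - h) * u) ^ (L - k)))"
    using assms by (intro sum.cong refl) (auto simp: ennreal_mult'[symmetric] power_mult_distrib mult_ac)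
  also have "\<dots> = ennreal (\<Sum>k\<le>L. real (L choose k) * (h * v) ^ k * ((1 - h) * u) ^ (L - k))"
    using assms by (intro sum_ennreal) auto
  also have "\<dots> = ennreal ((h * v + (1 - h) * u) ^ L)"
    by (subst binomial_ring) (simp add: atLeast0AtMost)
  finally show ?thesis .
qed

context
  fixes p :: "nat \<Rightarrow> real" and h :: real
  assumes site: "(p, h) \<in> Omega"
begin

lemma offspring_nonneg: "0 \<le> p L"
  and offspring_sums: "p sums 1"
  and move_prob_pos: "0 < h"
  and move_prob_le_1: "h \<le> 1"
  using site by (auto simp: Omega_def)

lemma offspring_summable: "summable p"
  using offspring_sums by (rule sums_summable)

lemma offspring_suminf: "suminf p = 1"
  using offspring_sums by (simp add: sums_unique[symmetric])

lemma pmf_offspring: "pmf (offspring p) L = p L"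
proof -
  have "(\<integral>\<^sup>+L. ennreal (p L) \<partial>count_space UNIV) = 1"
    using offspring_nonneg offspring_suminf
    by (simp add: nn_integral_count_space_nat suminf_ennreal2 offspring_summable)
  then show ?thesis
    unfolding offspring_def using offspring_nonneg by (subst pmf_embed_pmf) auto
qed

lemma offspring_pgf_summable:
  assumes "0 \<le> t" "t \<le> 1"
  shows "summable (\<lambda>L. p L * t ^ L)"
proof (rule summable_comparison_test[OF _ offspring_summable])
  show "\<exists>N. \<forall>n\<ge>N. norm (p n * t ^ n) \<le> p n"
    using offspring_nonneg assms by (auto intro!: mult_left_le power_le_one simp: abs_mult)
qed

lemma offspring_pgf_1: "offspring_pgf p 1 = 1"
  by (simp add: offspring_pgf_def offspring_suminf)

lemma offspring_pgf_mono: "0 \<le> t \<Longrightarrow> t \<le> t' \<Longrightarrow> t' \<le> 1 \<Longrightarrow> offspring_pgf p t \<le> offspring_pgf p t'"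
  unfolding offspring_pgf_def
  by (intro suminf_le offspring_pgf_summable mult_left_mono power_mono offspring_nonneg) auto

lemma offspring_pgf_nonneg: "0 \<le> t \<Longrightarrow> t \<le> 1 \<Longrightarrow> 0 \<le> offspring_pgf p t"
  unfolding offspring_pgf_def
  by (intro suminf_nonneg offspring_pgf_summable mult_nonneg_nonneg offspring_nonneg zero_le_power) auto

lemma offspring_pgf_le_1: "0 \<le> t \<Longrightarrow> t \<le> 1 \<Longrightarrow> offspring_pgf p t \<le> 1"
  using offspring_pgf_mono[of t 1] offspring_pgf_1 by auto

lemma isCont_offspring_pgf: "\<bar>t\<bar> < 1 \<Longrightarrow> isCont (offspring_pgf p) t"
  unfolding offspring_pgf_def[abs_def]
  by (rule isCont_powser[where K = 1]) (use offspring_summable in auto)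

lemma one_minus_offspring_pgf:
  assumes "0 \<le> t" "t \<le> 1"
  shows "1 - offspring_pgf p t = (\<Sum>L. p L * (1 - t ^ L))"
  and "summable (\<lambda>L. p L * (1 - t ^ L))"
proof -
  have "(\<lambda>L. p L * (1 - t ^ L)) = (\<lambda>L. p L - p L * t ^ L)"
    by (simp add: algebra_simps)
  moreover have "(\<lambda>L. p L - p L * t ^ L) sums (1 - offspring_pgf p t)"
    unfolding offspring_pgf_def
    by (intro sums_diff offspring_sums summable_sums offspring_pgf_summable assms)
  ultimately show "1 - offspring_pgf p t = (\<Sum>L. p L * (1 - t ^ L))"
    and "summable (\<lambda>L. p L * (1 - t ^ L))"
    by (auto simp: sums_iff)
qed

lemma offspring_pgf_less_1:
  assumes "p 0 < 1" "0 \<le> t" "t < 1"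
  shows "offspring_pgf p t < 1"
proof -
  have "\<exists>L\<ge>1. 0 < p L"
  proof (rule ccontr)
    assume "\<not> (\<exists>L\<ge>1. 0 < p L)"
    then have "p L = 0" if "L \<notin> {0}" for L
      using offspring_nonneg[of L] that by (simp add: not_less) (metis Suc_leI order_antisym)
    then have "suminf p = p 0"
      by (subst suminf_finite[of "{0}"]) auto
    with assms(1) offspring_suminf show False by simp
  qed
  then obtain L where L: "1 \<le> L" "0 < p L" by blast
  have "0 < (\<Sum>L. p L * (1 - t ^ L))"
  proof (rule suminf_pos2)
    show "summable (\<lambda>L. p L * (1 - t ^ L))"
      using one_minus_offspring_pgf(2) assms by simp
    show "0 \<le> p n * (1 - t ^ n)" for n
      using offspring_nonneg[of n] assms by (intro mult_nonneg_nonneg) (auto intro: power_le_one)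
    have "t ^ L < 1"
      using L(1) assms by (simp add: power_less_one_iff)
    then show "0 < p L * (1 - t ^ L)" using L(2) by simp
  qed
  then show ?thesis
    using one_minus_offspring_pgf(1)[of t] assms by simp
qed

lemma pgf_argument_nonneg: "0 \<le> u \<Longrightarrow> 0 \<le> h + (1 - h) * u"
  using move_prob_pos move_prob_le_1 by simp

lemma pgf_argument_le_1: "u \<le> 1 \<Longrightarrow> h + (1 - h) * u \<le> 1"
  using mult_left_mono[of u 1 "1 - h"] move_prob_le_1 by simp

lemma pgf_argument_less_1:
  assumes "h \<noteq> 1" "u < 1"
  shows "h + (1 - h) * u < 1"
proof -
  have "(1 - h) * u < (1 - h) * 1"
    using assms move_prob_le_1 by (intro mult_strict_left_mono) auto
  then show ?thesis by simp
qed

lemma stay_pgf_nonneg: "0 \<le> u \<Longrightarrow> u \<le> 1 \<Longrightarrow> 0 \<le> stay_pgf (p, h) u"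
  unfolding stay_pgf_eq by (intro offspring_pgf_nonneg pgf_argument_nonneg pgf_argument_le_1)

lemma stay_pgf_le_1: "0 \<le> u \<Longrightarrow> u \<le> 1 \<Longrightarrow> stay_pgf (p, h) u \<le> 1"
  unfolding stay_pgf_eq by (intro offspring_pgf_le_1 pgf_argument_nonneg pgf_argument_le_1)

lemma stay_pgf_mono: "0 \<le> u \<Longrightarrow> u \<le> u' \<Longrightarrow> u' \<le> 1 \<Longrightarrow> stay_pgf (p, h) u \<le> stay_pgf (p, h) u'"
  unfolding stay_pgf_eq using move_prob_le_1
  by (intro offspring_pgf_mono pgf_argument_nonneg pgf_argument_le_1 add_left_mono mult_left_mono) auto

lemma isCont_stay_pgf:
  assumes "0 \<le> u" "u < 1"
  shows "isCont (stay_pgf (p, h)) u"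
proof (cases "h = 1")
  case True
  then show ?thesis by (simp add: stay_pgf_eq[abs_def])
next
  case False
  then have "isCont (offspring_pgf p) (h + (1 - h) * u)"
    using pgf_argument_nonneg[OF assms(1)] pgf_argument_less_1[OF False assms(2)]
    by (intro isCont_offspring_pgf) simp
  then show ?thesis
    unfolding stay_pgf_eq[abs_def] by (intro continuous_intros isCont_o2[where f = "\<lambda>u. h + (1 - h) * u"])
qed

lemma nn_integral_particle_law:
  assumes "0 \<le> u" "u \<le> 1" "0 \<le> v" "v \<le> 1"
  shows "(\<integral>\<^sup>+z. ennreal (u ^ fst z * v ^ snd z) \<partial>particle_law (p, h)) = ennreal (particle_pgf (p, h) u v)"
proof -
  define t where "t = h * v + (1 - h) * u"
  have t: "0 \<le> t" "t \<le> 1"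
    using convex_bound_le[of v 1 u h "1 - h"] move_prob_pos move_prob_le_1 assms
    by (auto simp: t_def)
  have "(\<integral>\<^sup>+z. ennreal (u ^ fst z * v ^ snd z) \<partial>particle_law (p, h)) = (\<integral>\<^sup>+L. ennreal (t ^ L) \<partial>offspring p)"
    unfolding particle_law_def using move_prob_pos move_prob_le_1 assms
    by (simp add: nn_integral_binomial_pmf_power t_def)
  also have "\<dots> = (\<integral>\<^sup>+L. ennreal (p L * t ^ L) \<partial>count_space UNIV)"
    unfolding nn_integral_measure_pmf using t
    by (intro nn_integral_cong) (simp add: pmf_offspring ennreal_mult' offspring_nonneg)
  also have "\<dots> = ennreal (offspring_pgf p t)"
    using t offspring_nonneg unfolding offspring_pgf_def
    by (simp add: nn_integral_count_space_nat suminf_ennreal2 offspring_pgf_summable)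
  finally show ?thesis by (simp add: particle_pgf_def t_def)
qed

lemma mean_offspring_finite:
  assumes "mean_offspring p \<noteq> \<top>"
  shows "summable (\<lambda>L. real L * p L)" and "mean_offspring p = ennreal (\<Sum>L. real L * p L)"
proof -
  show summable: "summable (\<lambda>L. real L * p L)"
    using assms offspring_nonneg unfolding mean_offspring_def
    by (intro summable_suminf_not_top) auto
  show "mean_offspring p = ennreal (\<Sum>L. real L * p L)"
    unfolding mean_offspring_def using offspring_nonneg by (intro suminf_ennreal2 summable) auto
qed

lemma one_minus_offspring_pgf_le_mean:
  assumes summable: "summable (\<lambda>L. real L * p L)" and t: "0 \<le> t" "t \<le> 1"
  shows "1 - offspring_pgf p t \<le> (\<Sum>L. real L * p L) * (1 - t)"
proof -
  have "(\<Sum>L. p L * (1 - t ^ L)) \<le> (\<Sum>L. real L * p L * (1 - t))"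
    using mult_left_mono[OF one_minus_power_le[OF t(1)] offspring_nonneg]
    by (intro suminf_le one_minus_offspring_pgf(2)[OF t] summable_mult2 summable)
      (simp add: mult_ac)
  then show ?thesis
    using one_minus_offspring_pgf(1)[OF t] suminf_mult2[OF summable] by simp
qed

lemma one_minus_offspring_pgf_less_mean:
  assumes summable: "summable (\<lambda>L. real L * p L)" and t: "0 \<le> t" "t < 1"
    and L: "2 \<le> L" "0 < p L"
  shows "1 - offspring_pgf p t < (\<Sum>L. real L * p L) * (1 - t)"
proof -
  define gap where "gap L = real L * p L * (1 - t) - p L * (1 - t ^ L)" for L
  have "0 < suminf gap"
  proof (rule suminf_pos2)
    show "summable gap"
      unfolding gap_def using t by (intro summable_diff summable_mult2 summable one_minus_offspring_pgf(2)) auto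
    show "0 \<le> gap n" for n
      using mult_left_mono[OF one_minus_power_le[OF t(1)] offspring_nonneg, of n n]
      by (simp add: gap_def mult_ac)
    show "0 < gap L"
      using one_minus_power_less[OF t L(1)] L(2) by (simp add: gap_def mult.assoc mult.left_commute)
  qed
  moreover have "suminf gap = (\<Sum>L. real L * p L) * (1 - t) - (1 - offspring_pgf p t)"
    unfolding gap_def using t
    by (simp add: suminf_diff[symmetric] summable_mult2 summable one_minus_offspring_pgf
        suminf_mult2[OF summable])
  ultimately show ?thesis by simp
qed

lemma mean_le_1_if_at_most_one_child:
  assumes "\<And>L. 2 \<le> L \<Longrightarrow> p L = 0"
  shows "(\<Sum>L. real L * p L) \<le> 1"
proof -
  have "(\<Sum>L. real L * p L) = (\<Sum>L<2. real L * p L)"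
    using assms by (intro suminf_finite) auto
  also have "\<dots> = p 1" by (simp add: numeral_2_eq_2)
  also have "\<dots> \<le> (\<Sum>L<2. p L)" using offspring_nonneg by (simp add: numeral_2_eq_2)
  also have "\<dots> \<le> 1"
    using sum_le_suminf[OF offspring_summable] offspring_nonneg offspring_suminf
    by fastforce
  finally show ?thesis .
qed

lemma stay_pgf_gt_self:
  assumes subcritical: "stay_mean (p, h) \<le> 1" and u: "0 \<le> u" "u < 1"
  shows "u < stay_pgf (p, h) u"
proof (cases "h = 1")
  case True
  then show ?thesis using u by (simp add: stay_pgf_eq offspring_pgf_1)
next
  case False
  note h = move_prob_pos move_prob_le_1
  define t where "t = h + (1 - h) * u"
  have t: "0 \<le> t" "t < 1" "1 - t = (1 - h) * (1 - u)"
    using pgf_argument_nonneg[OF u(1)] pgf_argument_less_1[OF False u(2)]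
    by (auto simp: t_def algebra_simps)
  have "mean_offspring p \<noteq> \<top>"
    using subcritical False h by (auto simp: stay_mean_def ennreal_top_mult top_unique)
  note mean = mean_offspring_finite[OF this]
  define m where "m = (\<Sum>L. real L * p L)"
  have m_crit: "m * (1 - h) \<le> 1"
    using subcritical h mean(2) by (simp add: stay_mean_def m_def ennreal_mult''[symmetric])
  have "1 - offspring_pgf p t < 1 - u"
  proof (cases "\<exists>L\<ge>2. 0 < p L")
    case True
    then obtain L where "2 \<le> L" "0 < p L" by blast
    then have "1 - offspring_pgf p t < m * (1 - h) * (1 - u)"
      using one_minus_offspring_pgf_less_mean[OF mean(1) t(1,2)] t(3) by (simp add: m_def mult.assoc)
    also have "\<dots> \<le> 1 - u"
      using mult_right_mono[OF m_crit, of "1 - u"] u by simp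
    finally show ?thesis .
  next
    case False
    then have "m \<le> 1"
      using mean_le_1_if_at_most_one_child offspring_nonneg unfolding m_def
      by (meson linorder_not_less order_antisym)
    then have "m * (1 - h) \<le> 1 * (1 - h)"
      using h by (intro mult_right_mono) auto
    then have "m * (1 - h) < 1"
      using h by simp
    have "1 - offspring_pgf p t \<le> m * (1 - h) * (1 - u)"
      using one_minus_offspring_pgf_le_mean[OF mean(1) t(1)] t by (simp add: m_def mult.assoc)
    also have "\<dots> < 1 - u"
      using \<open>m * (1 - h) < 1\<close> u by simp
    finally show ?thesis .
  qed
  then show ?thesis by (simp add: stay_pgf_eq t_def)
qed

lemma truncated_stay_mean_gt_1:
  assumes "1 < stay_mean (p, h)"
  obtains K where "1 < (1 - h) * (\<Sum>L<K. real L * p L)"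
proof -
  have "stay_mean (p, h) = (SUP K. (\<Sum>L<K. ennreal (real L * p L)) * ennreal (1 - h))"
    unfolding stay_mean_def mean_offspring_def suminf_eq_SUP by (simp add: SUP_mult_right_ennreal)
  with assms obtain K where "1 < (\<Sum>L<K. ennreal (real L * p L)) * ennreal (1 - h)"
    by (auto simp: less_SUP_iff)
  also have "\<dots> = ennreal ((1 - h) * (\<Sum>L<K. real L * p L))"
    using move_prob_le_1 offspring_nonneg
    by (subst sum_ennreal) (auto simp: ennreal_mult'[symmetric] mult.commute intro!: sum_nonneg)
  finally show ?thesis
    using that by (simp add: ennreal_less_iff)
qed

lemma stay_pgf_le_self:
  assumes supercritical: "1 < stay_mean (p, h)"
  obtains u where "0 \<le> u" "u < 1" "stay_pgf (p, h) u \<le> u"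
proof -
  note h = move_prob_pos move_prob_le_1
  have "h \<noteq> 1" using supercritical by (auto simp: stay_mean_def)
  obtain K where K: "1 < (1 - h) * (\<Sum>L<K. real L * p L)"
    using truncated_stay_mean_gt_1[OF supercritical] .
  define t where "t u = h + (1 - h) * u" for u
  define g where "g u = (1 - h) * (\<Sum>L<K. p L * (\<Sum>i<L. t u ^ i))" for u
  \<comment> \<open>\<open>(1 - u) * g u\<close> is a partial sum of \<open>1 - stay_pgf (p, h) u\<close>, and \<open>g 1\<close> is the truncated mean.\<close>
  have "(g \<longlongrightarrow> g 1) (at_left 1)"
    unfolding g_def t_def by (intro tendsto_intros)
  moreover have "g 1 = (1 - h) * (\<Sum>L<K. real L * p L)"
    by (simp add: g_def t_def mult_ac)
  ultimately obtain u where u: "0 < u" "u < 1" "1 < g u"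
    using K by (elim tendsto_at_left_1_exceeds) simp
  have tu: "0 \<le> t u" "t u \<le> 1"
    using pgf_argument_nonneg[of u] pgf_argument_le_1[of u] u by (simp_all add: t_def)
  have one_minus_tu: "1 - t u = (1 - h) * (1 - u)"
    by (simp add: t_def algebra_simps)
  have summand_nonneg: "0 \<le> p L * (1 - t u ^ L)" for L
    using offspring_nonneg[of L] power_le_one[OF tu] by simp
  have "(1 - u) * g u = (\<Sum>L<K. p L * (1 - t u ^ L))"
    unfolding g_def one_diff_power_eq one_minus_tu by (simp add: sum_distrib_left mult_ac)
  also have "\<dots> \<le> (\<Sum>L. p L * (1 - t u ^ L))"
    by (intro sum_le_suminf one_minus_offspring_pgf(2)[OF tu] summand_nonneg) simp
  also have "\<dots> = 1 - stay_pgf (p, h) u"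
    using one_minus_offspring_pgf(1)[OF tu] by (simp add: stay_pgf_eq t_def)
  finally have "(1 - u) * 1 < 1 - stay_pgf (p, h) u"
    using mult_strict_left_mono[OF u(3), of "1 - u"] u(2) by linarith
  then show ?thesis
    using that[of u] u by simp
qed

lemma stay_pgf_iterate_0_nonneg: "0 \<le> (stay_pgf (p, h) ^^ m) 0"
  and stay_pgf_iterate_0_le_1: "(stay_pgf (p, h) ^^ m) 0 \<le> 1"
  by (induction m) (auto intro: stay_pgf_nonneg stay_pgf_le_1)

lemma incseq_stay_pgf_iterate_0: "incseq (\<lambda>m. (stay_pgf (p, h) ^^ m) 0)"
proof (rule incseq_SucI)
  show "(stay_pgf (p, h) ^^ m) 0 \<le> (stay_pgf (p, h) ^^ Suc m) 0" for m
  proof (induction m)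
    case 0
    show ?case using stay_pgf_nonneg[of 0] by simp
  next
    case (Suc m)
    show ?case
      using stay_pgf_mono[OF stay_pgf_iterate_0_nonneg Suc.IH stay_pgf_iterate_0_le_1[of "Suc m"]]
      by simp
  qed
qed

lemma stay_pgf_iterate_0_le:
  assumes "0 \<le> u" "u \<le> 1" "stay_pgf (p, h) u \<le> u"
  shows "(stay_pgf (p, h) ^^ m) 0 \<le> u"
proof (induction m)
  case (Suc m)
  then have "stay_pgf (p, h) ((stay_pgf (p, h) ^^ m) 0) \<le> stay_pgf (p, h) u"
    using assms stay_pgf_iterate_0_nonneg by (intro stay_pgf_mono)
  then show ?case using assms by simp
qed (use assms in simp)

lemma stay_pgf_iterate_0_tendsto_1:
  assumes no_fixed_point: "\<And>u. 0 \<le> u \<Longrightarrow> u < 1 \<Longrightarrow> u < stay_pgf (p, h) u"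
  shows "(\<lambda>m. (stay_pgf (p, h) ^^ m) 0) \<longlonglongrightarrow> 1"
proof -
  define q where "q m = (stay_pgf (p, h) ^^ m) 0" for m
  define Q where "Q = (SUP m. q m)"
  have "bdd_above (range q)"
    using stay_pgf_iterate_0_le_1 by (auto simp: q_def intro!: bdd_aboveI)
  then have lim: "q \<longlonglongrightarrow> Q"
    unfolding Q_def using incseq_stay_pgf_iterate_0 by (intro LIMSEQ_incseq_SUP) (simp_all add: q_def[abs_def])
  have Q: "0 \<le> Q" "Q \<le> 1"
    using LIMSEQ_le_const[OF lim] LIMSEQ_le_const2[OF lim] stay_pgf_iterate_0_nonneg stay_pgf_iterate_0_le_1
    by (auto simp: q_def)
  have "Q = 1"
  proof (rule ccontr)
    assume "Q \<noteq> 1"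
    with Q have "Q < 1" by simp
    have "(\<lambda>m. stay_pgf (p, h) (q m)) \<longlonglongrightarrow> stay_pgf (p, h) Q"
      using isCont_tendsto_compose[OF isCont_stay_pgf[OF Q(1) \<open>Q < 1\<close>] lim] .
    moreover have "(\<lambda>m. stay_pgf (p, h) (q m)) \<longlonglongrightarrow> Q"
      using LIMSEQ_Suc[OF lim] by (simp add: q_def)
    ultimately have "stay_pgf (p, h) Q = Q" by (rule LIMSEQ_unique)
    with no_fixed_point[OF Q(1) \<open>Q < 1\<close>] show False by simp
  qed
  with lim show ?thesis by (simp add: q_def[abs_def])
qed

end

section \<open>The Galton--Watson process of particles staying at a site\<close>

text \<open>The particles labelled below \<open>k\<close> at site \<open>x\<close> at time \<open>N\<close>, together with those of their
  descendants that never leave \<open>x\<close>, form a Galton--Watson process in the noise \<open>\<xi>\<close>; in generation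
  \<open>m\<close> its members are the particles labelled below \<open>local_gw \<xi> x N k m\<close> at site \<open>x\<close> at time \<open>N + m\<close>.\<close>

fun local_gw :: "(nat \<times> nat \<times> nat \<Rightarrow> nat \<times> nat) \<Rightarrow> nat \<Rightarrow> nat \<Rightarrow> nat \<Rightarrow> nat \<Rightarrow> nat" where
  "local_gw \<xi> x N k 0 = k"
| "local_gw \<xi> x N k (Suc m) = (\<Sum>j<local_gw \<xi> x N k m. fst (\<xi> (N + m, x, j)))"

lemma measurable_local_gw [measurable]: "(\<lambda>\<xi>. local_gw \<xi> x N k m) \<in> PiM_pmf D \<rightarrow>\<^sub>M count_space UNIV"
proof (induction m)
  case (Suc m)
  then show ?case
    using measurable_random_sum_components[where f = fst and c = "\<lambda>j. (N + m, x, j)"] by simp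
qed simp

lemma sets_local_gw [measurable]: "{\<xi>. P (local_gw \<xi> x N k m)} \<in> sets (PiM_pmf D)"
  using measurable_sets[OF measurable_local_gw[of x N k m D], of "{n. P n}"] by (simp add: vimage_def)

lemma sets_local_gw_survives [measurable]: "{\<xi>. \<forall>m. local_gw \<xi> x N k m \<noteq> 0} \<in> sets (PiM_pmf D)"
proof -
  have "{\<xi>. \<forall>m. local_gw \<xi> x N k m \<noteq> 0} = (\<Inter>m. {\<xi>. local_gw \<xi> x N k m \<noteq> 0})" by auto
  then show ?thesis by (auto intro!: sets.countable_INT)
qed

lemma local_gw_depends_only_on: "depends_only_on {i. N \<le> fst i \<and> fst i < N + m} (\<lambda>\<xi>. local_gw \<xi> x N k m)"
proof (induction m)
  case (Suc m)
  show ?case unfolding depends_only_on_def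
  proof (intro allI impI)
    fix \<xi> \<xi>' :: "nat \<times> nat \<times> nat \<Rightarrow> nat \<times> nat"
    assume agree: "\<forall>i\<in>{i. N \<le> fst i \<and> fst i < N + Suc m}. \<xi> i = \<xi>' i"
    then have "local_gw \<xi> x N k m = local_gw \<xi>' x N k m"
      using Suc.IH unfolding depends_only_on_def by auto
    moreover have "\<xi> (N + m, x, j) = \<xi>' (N + m, x, j)" for j
      using agree by auto
    ultimately show "local_gw \<xi> x N k (Suc m) = local_gw \<xi>' x N k (Suc m)"
      by simp
  qed
qed (simp add: depends_only_on_def)

lemma local_gw_eq_0_mono:
  assumes "local_gw \<xi> x N k m = 0" "m \<le> m'"
  shows "local_gw \<xi> x N k m' = 0"
  using assms(2) by (induction m' rule: dec_induct) (simp_all add: assms(1))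

context
  fixes p :: "nat \<Rightarrow> real" and h :: real and D :: "nat \<times> nat \<times> nat \<Rightarrow> (nat \<times> nat) pmf" and x :: nat
  assumes site: "(p, h) \<in> Omega" and D_site: "\<And>t j. D (t, x, j) = particle_law (p, h)"
begin

lemma nn_integral_local_gw_power:
  assumes "0 \<le> u" "u \<le> 1"
  shows "(\<integral>\<^sup>+\<xi>. ennreal (u ^ local_gw \<xi> x N k m) \<partial>PiM_pmf D) = ennreal ((stay_pgf (p, h) ^^ m) u ^ k)"
  using assms
proof (induction m arbitrary: u)
  case 0
  then show ?case using prob_space.emeasure_space_1[OF prob_space_PiM_pmf, of D] by simp
next
  case (Suc m)
  let ?\<phi> = "stay_pgf (p, h)"
  define A where "A = {i :: nat \<times> nat \<times> nat. fst i < N + m}"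
  have \<phi>u: "0 \<le> ?\<phi> u" "?\<phi> u \<le> 1"
    using Suc.prems by (simp_all add: stay_pgf_nonneg[OF site] stay_pgf_le_1[OF site])
  \<comment> \<open>given the first \<open>m\<close> generations, each member of generation \<open>m\<close> contributes an independent factor \<open>?\<phi> u\<close>\<close>
  have last_generation: "(\<integral>\<^sup>+b. ennreal (u ^ local_gw (merge_on A a b) x N k (Suc m)) \<partial>PiM_pmf D)
      = ennreal (?\<phi> u) ^ local_gw a x N k m" for a
  proof -
    have "local_gw (merge_on A a b) x N k m = local_gw a x N k m" for b
      by (rule depends_only_on_merge_on_left[OF depends_only_on_mono[OF _ local_gw_depends_only_on]])
        (auto simp: A_def)
    moreover have "merge_on A a b (N + m, x, j) = b (N + m, x, j)" for b j
      by (simp add: merge_on_def A_def)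
    ultimately have "(\<integral>\<^sup>+b. ennreal (u ^ local_gw (merge_on A a b) x N k (Suc m)) \<partial>PiM_pmf D)
        = (\<integral>\<^sup>+b. (\<Prod>j<local_gw a x N k m. ennreal (u ^ fst (b (N + m, x, j)))) \<partial>PiM_pmf D)"
      using Suc.prems by (intro nn_integral_cong) (simp add: power_sum prod_ennreal)
    also have "\<dots> = (\<integral>\<^sup>+z. ennreal (u ^ fst z) \<partial>measure_pmf (particle_law (p, h))) ^ local_gw a x N k m"
      by (rule nn_integral_PiM_pmf_prod_components) (auto simp: inj_def D_site)
    also have "\<dots> = ennreal (?\<phi> u) ^ local_gw a x N k m"
      using nn_integral_particle_law[OF site Suc.prems, of 1] by (simp add: stay_pgf_def)
    finally show ?thesis .
  qed
  have "(\<integral>\<^sup>+\<xi>. ennreal (u ^ local_gw \<xi> x N k (Suc m)) \<partial>PiM_pmf D)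
      = (\<integral>\<^sup>+a. \<integral>\<^sup>+b. ennreal (u ^ local_gw (merge_on A a b) x N k (Suc m)) \<partial>PiM_pmf D \<partial>PiM_pmf D)"
    by (rule nn_integral_PiM_pmf_merge_on) (rule borel_measurable_comp_count_space[OF measurable_local_gw])
  also have "\<dots> = (\<integral>\<^sup>+a. ennreal (?\<phi> u ^ local_gw a x N k m) \<partial>PiM_pmf D)"
    using \<phi>u by (simp only: last_generation) (simp add: ennreal_power)
  also have "\<dots> = ennreal ((?\<phi> ^^ m) (?\<phi> u) ^ k)"
    by (rule Suc.IH[OF \<phi>u])
  finally show ?case
    by (simp add: funpow_swap1)
qed

lemma prob_local_gw_eq_0:
  "measure (PiM_pmf D) {\<xi>. local_gw \<xi> x N k m = 0} = (stay_pgf (p, h) ^^ m) 0 ^ k"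
proof -
  have "emeasure (PiM_pmf D) {\<xi>. local_gw \<xi> x N k m = 0}
      = (\<integral>\<^sup>+\<xi>. indicator {\<xi>. local_gw \<xi> x N k m = 0} \<xi> \<partial>PiM_pmf D)"
    by (rule nn_integral_indicator[symmetric]) simp
  also have "\<dots> = (\<integral>\<^sup>+\<xi>. ennreal (0 ^ local_gw \<xi> x N k m) \<partial>PiM_pmf D)"
    by (intro nn_integral_cong) (simp add: indicator_def)
  also have "\<dots> = ennreal ((stay_pgf (p, h) ^^ m) 0 ^ k)"
    by (rule nn_integral_local_gw_power) simp_all
  finally have "emeasure (PiM_pmf D) {\<xi>. local_gw \<xi> x N k m = 0} = ennreal ((stay_pgf (p, h) ^^ m) 0 ^ k)" .
  then show ?thesis
    using stay_pgf_iterate_0_nonneg[OF site] by (simp add: measure_def)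
qed

lemma AE_local_gw_extinct:
  assumes no_fixed_point: "\<And>u. 0 \<le> u \<Longrightarrow> u < 1 \<Longrightarrow> u < stay_pgf (p, h) u"
  shows "AE \<xi> in PiM_pmf D. \<exists>m. local_gw \<xi> x N k m = 0"
proof -
  interpret prob_space "PiM_pmf D" by (rule prob_space_PiM_pmf)
  define S where "S = {\<xi>. \<forall>m. local_gw \<xi> x N k m \<noteq> 0}"
  have "prob S \<le> 1 - (stay_pgf (p, h) ^^ m) 0 ^ k" for m
  proof -
    have "prob S \<le> prob (space (PiM_pmf D) - {\<xi>. local_gw \<xi> x N k m = 0})"
      by (intro finite_measure_mono) (simp_all add: S_def subset_eq set_diff_eq)
    then show ?thesis
      using prob_compl[OF sets_local_gw[where P = "\<lambda>n. n = 0"]] by (simp add: prob_local_gw_eq_0)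
  qed
  moreover have "(\<lambda>m. 1 - (stay_pgf (p, h) ^^ m) 0 ^ k) \<longlonglongrightarrow> 0"
    using stay_pgf_iterate_0_tendsto_1[OF site no_fixed_point] by (auto intro!: tendsto_eq_intros)
  ultimately have "prob S \<le> 0"
    by (intro LIMSEQ_le_const[of _ 0]) auto
  moreover have "S \<in> events"
    unfolding S_def by (rule sets_local_gw_survives)
  ultimately have "S \<in> null_sets (PiM_pmf D)"
    by (simp add: emeasure_eq_measure null_sets_def measure_nonneg antisym)
  then show ?thesis
    by (rule AE_I') (auto simp: S_def)
qed

lemma prob_local_gw_survives_ge:
  assumes "0 \<le> u" "u \<le> 1" "stay_pgf (p, h) u \<le> u"
  shows "1 - u \<le> measure (PiM_pmf D) {\<xi>. \<forall>m. local_gw \<xi> x N 1 m \<noteq> 0}"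
proof -
  interpret prob_space "PiM_pmf D" by (rule prob_space_PiM_pmf)
  define E where "E m = {\<xi>. local_gw \<xi> x N 1 m = 0}" for m
  have "incseq E"
    unfolding E_def by (intro incseq_SucI) (auto intro: local_gw_eq_0_mono)
  moreover have "range E \<subseteq> events"
    by (auto simp: E_def)
  ultimately have lim: "(\<lambda>m. prob (E m)) \<longlonglongrightarrow> prob (\<Union>m. E m)" and "(\<Union>m. E m) \<in> events"
    by (auto intro: finite_Lim_measure_incseq)
  from lim have "prob (\<Union>m. E m) \<le> u"
    by (rule LIMSEQ_le_const2)
      (auto simp: E_def prob_local_gw_eq_0 stay_pgf_iterate_0_le[OF site assms])
  moreover have "{\<xi>. \<forall>m. local_gw \<xi> x N 1 m \<noteq> 0} = space (PiM_pmf D) - (\<Union>m. E m)"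
    by (simp add: E_def set_eq_iff)
  ultimately show ?thesis
    using prob_compl[OF \<open>(\<Union>m. E m) \<in> events\<close>] by simp
qed

end

section \<open>Local survival in a fixed environment\<close>

lemma noise_eq_PiM_pmf: "noise \<omega> = PiM_pmf (\<lambda>i. particle_law (\<omega> (fst (snd i))))"
  by (simp add: noise_def)

lemma measurable_eta [measurable]: "(\<lambda>\<xi>. eta \<xi> n x) \<in> PiM_pmf D \<rightarrow>\<^sub>M count_space UNIV"
proof (induction n arbitrary: x)
  case (Suc n)
  have "(\<lambda>\<xi>. \<Sum>j<eta \<xi> n y. f (\<xi> (n, y, j))) \<in> PiM_pmf D \<rightarrow>\<^sub>M count_space UNIV" for y and f :: "nat \<times> nat \<Rightarrow> nat"
    by (rule measurable_random_sum_components[OF Suc.IH])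
  then show ?case
    by (simp del: eta.simps(1) add: measurable_add_nat)
qed simp

lemma sets_eta_eventually_0 [measurable]: "{\<xi>. \<exists>N. \<forall>n\<ge>N. eta \<xi> n x = 0} \<in> sets (PiM_pmf D)"
proof -
  have "{\<xi>. eta \<xi> n x = 0} \<in> sets (PiM_pmf D)" for n
    using measurable_sets[OF measurable_eta[of n x D], of "{0}"] by (simp add: vimage_def)
  moreover have "{\<xi>. \<exists>N. \<forall>n\<ge>N. eta \<xi> n x = 0} = (\<Union>N. \<Inter>n\<in>{N..}. {\<xi>. eta \<xi> n x = 0})"
    by auto
  ultimately show ?thesis by auto
qed

lemma of_nat_tendsto_0_iff: "(\<lambda>n. real (f n)) \<longlonglongrightarrow> 0 \<longleftrightarrow> (\<exists>N. \<forall>n\<ge>N. f n = 0)"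
proof
  assume "(\<lambda>n. real (f n)) \<longlonglongrightarrow> 0"
  then have "eventually (\<lambda>n. real (f n) < 1) sequentially"
    by (rule order_tendstoD(2)) simp
  then show "\<exists>N. \<forall>n\<ge>N. f n = 0"
    by (auto simp: eventually_sequentially)
next
  assume "\<exists>N. \<forall>n\<ge>N. f n = 0"
  then have "eventually (\<lambda>n. real (f n) = 0) sequentially"
    by (auto simp: eventually_sequentially)
  then show "(\<lambda>n. real (f n)) \<longlonglongrightarrow> 0"
    by (rule tendsto_eventually)
qed

lemma local_survival_iff:
  "local_survival \<omega> \<longleftrightarrow> (\<exists>x. measure (noise \<omega>) {\<xi>. \<exists>N. \<forall>n\<ge>N. eta \<xi> n x = 0} < 1)"
  by (simp add: local_survival_def of_nat_tendsto_0_iff noise_eq_PiM_pmf)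

lemma eta_0_eq_local_gw: "eta \<xi> n 0 = local_gw \<xi> 0 0 1 n"
  by (induction n) auto

lemma eta_Suc_eq_local_gw:
  assumes "\<forall>n\<ge>N. eta \<xi> n x = 0"
  shows "eta \<xi> (N + m) (Suc x) = local_gw \<xi> (Suc x) N (eta \<xi> N (Suc x)) m"
  using assms by (induction m) simp_all

lemma AE_eta_eventually_0:
  assumes sites: "\<And>y. \<omega> y \<in> Omega"
    and no_fixed_point: "\<And>y u. 0 \<le> u \<Longrightarrow> u < 1 \<Longrightarrow> u < stay_pgf (\<omega> y) u"
  shows "AE \<xi> in noise \<omega>. \<exists>N. \<forall>n\<ge>N. eta \<xi> n x = 0"
proof -
  have extinct: "AE \<xi> in noise \<omega>. \<exists>m. local_gw \<xi> y N k m = 0" for y N k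
  proof -
    obtain p h where "\<omega> y = (p, h)" by fastforce
    then show ?thesis
      unfolding noise_eq_PiM_pmf using sites[of y] no_fixed_point[of _ y]
      by (intro AE_local_gw_extinct) auto
  qed
  show ?thesis
  proof (induction x)
    case 0
    show ?case
      using extinct[of 0 0 1] by eventually_elim (auto simp: eta_0_eq_local_gw intro: local_gw_eq_0_mono)
  next
    case (Suc x)
    have "AE \<xi> in noise \<omega>. \<forall>N k. \<exists>m. local_gw \<xi> (Suc x) N k m = 0"
      by (simp add: AE_all_countable extinct)
    with Suc.IH show ?case
    proof eventually_elim
      case (elim \<xi>)
      then obtain N m where N: "\<forall>n\<ge>N. eta \<xi> n x = 0"
        and m: "local_gw \<xi> (Suc x) N (eta \<xi> N (Suc x)) m = 0"
        by blast
      have "eta \<xi> n (Suc x) = 0" if "N + m \<le> n" for n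
        using eta_Suc_eq_local_gw[OF N, of "n - N"] local_gw_eq_0_mono[OF m, of "n - N"] that by simp
      then show ?case by blast
    qed
  qed
qed

lemma no_local_survival:
  assumes sites: "\<And>y. \<omega> y \<in> Omega" and subcritical: "\<And>y. stay_mean (\<omega> y) \<le> 1"
  shows "\<not> local_survival \<omega>"
proof -
  have no_fixed_point: "u < stay_pgf (\<omega> y) u" if "0 \<le> u" "u < 1" for y u
  proof -
    obtain p h where "\<omega> y = (p, h)" by fastforce
    then show ?thesis using stay_pgf_gt_self sites[of y] subcritical[of y] that by simp
  qed
  have "measure (noise \<omega>) {\<xi>. \<exists>N. \<forall>n\<ge>N. eta \<xi> n x = 0} = 1" for x
  proof -
    have "AE \<xi> in noise \<omega>. \<exists>N. \<forall>n\<ge>N. eta \<xi> n x = 0"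
      using sites no_fixed_point by (rule AE_eta_eventually_0)
    then show ?thesis
      unfolding noise_eq_PiM_pmf
      using prob_space.AE_in_set_eq_1[OF prob_space_PiM_pmf sets_eta_eventually_0] by simp
  qed
  then show ?thesis
    by (simp add: local_survival_iff)
qed

lemma prob_particle_moves_pos:
  assumes site: "(p, h) \<in> Omega" and "p 0 < 1"
  shows "0 < measure (particle_law (p, h)) {z. snd z \<noteq> 0}"
proof -
  note h = move_prob_pos[OF site] move_prob_le_1[OF site]
  have "(\<lambda>z::nat \<times> nat. ennreal (1 ^ fst z * 0 ^ snd z)) = indicator {z. snd z = 0}"
    by (auto simp: fun_eq_iff indicator_def)
  then have "emeasure (particle_law (p, h)) {z. snd z = 0}
      = (\<integral>\<^sup>+z. ennreal (1 ^ fst z * 0 ^ snd z) \<partial>particle_law (p, h))"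
    by simp
  also have "\<dots> = ennreal (offspring_pgf p (1 - h))"
    using nn_integral_particle_law[OF site, of 1 0] by (simp add: particle_pgf_def)
  finally have no_move: "measure (particle_law (p, h)) {z. snd z = 0} = offspring_pgf p (1 - h)"
    using offspring_pgf_nonneg[OF site, of "1 - h"] h by (simp add: measure_def)
  have "offspring_pgf p (1 - h) < 1"
    using offspring_pgf_less_1[OF site \<open>p 0 < 1\<close>, of "1 - h"] h by simp
  then show ?thesis
    using measure_pmf.prob_compl[of "{z. snd z = 0}" "particle_law (p, h)"] no_move
    by (simp add: set_diff_eq)
qed

lemma eta_diagonal_pos:
  assumes "\<forall>y<x. snd (\<xi> (y, y, 0)) \<noteq> 0"
  shows "1 \<le> eta \<xi> x x"
  using assms
proof (induction x)
  case (Suc x)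
  then have "0 < eta \<xi> x x" by simp
  then have "snd (\<xi> (x, x, 0)) \<le> (\<Sum>j<eta \<xi> x x. snd (\<xi> (x, x, j)))"
    by (intro member_le_sum) auto
  moreover have "0 < snd (\<xi> (x, x, 0))"
    using Suc.prems by simp
  ultimately show ?case
    by simp
qed simp

lemma local_gw_le_eta:
  assumes "1 \<le> eta \<xi> x x"
  shows "local_gw \<xi> x x 1 m \<le> eta \<xi> (x + m) x"
proof (induction m)
  case (Suc m)
  have "local_gw \<xi> x x 1 (Suc m) \<le> (\<Sum>j<eta \<xi> (x + m) x. fst (\<xi> (x + m, x, j)))"
    using Suc.IH by (simp add: sum_mono2)
  also have "\<dots> \<le> eta \<xi> (x + Suc m) x"
    by simp
  finally show ?case .
qed (use assms in simp)

lemma emeasure_diagonal_moves_pos: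
  assumes "\<And>y. y < x \<Longrightarrow> \<omega> y \<in> Omega" "\<And>y. y < x \<Longrightarrow> fst (\<omega> y) 0 < 1"
  shows "0 < emeasure (noise \<omega>) {\<xi>. \<forall>y<x. snd (\<xi> (y, y, 0)) \<noteq> 0}"
proof -
  let ?D = "\<lambda>i. particle_law (\<omega> (fst (snd i)))"
  interpret product_prob_space "\<lambda>i. measure_pmf (?D i)" UNIV by unfold_locales
  define J where "J = (\<lambda>y. (y, y, 0::nat)) ` {..<x}"
  have "{\<xi>. \<forall>y<x. snd (\<xi> (y, y, 0)) \<noteq> 0} = {\<xi> \<in> space (PiM_pmf ?D). \<forall>i\<in>J. \<xi> i \<in> {z. snd z \<noteq> 0}}"
    by (auto simp: J_def)
  then have "emeasure (noise \<omega>) {\<xi>. \<forall>y<x. snd (\<xi> (y, y, 0)) \<noteq> 0}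
      = emeasure (PiM_pmf ?D) {\<xi> \<in> space (PiM_pmf ?D). \<forall>i\<in>J. \<xi> i \<in> {z. snd z \<noteq> 0}}"
    by (simp only: noise_eq_PiM_pmf)
  also have "\<dots> = (\<Prod>i\<in>J. emeasure (?D i) {z. snd z \<noteq> 0})"
    by (rule emeasure_PiM_Collect) (auto simp: J_def)
  also have "\<dots> = (\<Prod>y<x. ennreal (measure (particle_law (\<omega> y)) {z. snd z \<noteq> 0}))"
    unfolding J_def by (subst prod.reindex) (auto simp: inj_on_def measure_pmf.emeasure_eq_measure)
  also have "\<dots> > 0"
  proof -
    have "0 < measure (particle_law (\<omega> y)) {z. snd z \<noteq> 0}" if "y < x" for y
      using prob_particle_moves_pos assms[OF that] by (cases "\<omega> y") auto
    then show ?thesis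
      by (simp add: prod_ennreal) (auto intro!: prod_pos)
  qed
  finally show ?thesis .
qed

lemma eventually_empty_imp_local_gw_extinct:
  assumes "\<forall>n\<ge>N. eta \<xi> n x = 0" "\<forall>y<x. snd (\<xi> (y, y, 0)) \<noteq> 0"
  shows "local_gw \<xi> x x 1 N = 0"
  using local_gw_le_eta[OF eta_diagonal_pos[OF assms(2)], of N] assms(1) by simp

lemma sets_diagonal_moves [measurable]:
  "{\<xi>. \<forall>y<x. snd (\<xi> (y, y, 0)) \<noteq> 0} \<in> sets (PiM_pmf D)" for x :: nat
proof -
  have "{\<xi>. \<forall>y<x. snd (\<xi> (y, y, 0)) \<noteq> 0}
      = {\<xi> \<in> space (PiM_pmf D). \<forall>y\<in>{..<x}. \<xi> (y, y, 0) \<in> {z. snd z \<noteq> 0}}"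
    by auto
  also have "\<dots> \<in> sets (PiM_pmf D)"
  proof (rule sets.sets_Collect_finite_All)
    show "{\<xi> \<in> space (PiM_pmf D). \<xi> (y, y, 0) \<in> {z. snd z \<noteq> 0}} \<in> sets (PiM_pmf D)" for y
      using sets_PiM_pmf_component[of "(y, y, 0)" "{z. snd z \<noteq> 0}" D] by simp
  qed simp
  finally show ?thesis .
qed

text \<open>The diagonal moves use only the noise before time \<open>x\<close>, the local process started at time \<open>x\<close>
  only the noise from time \<open>x\<close> on.\<close>

lemma emeasure_diagonal_moves_Int_local_gw_survives:
  "emeasure (PiM_pmf D) ({\<xi>. \<forall>y<x. snd (\<xi> (y, y, 0)) \<noteq> 0} \<inter> {\<xi>. \<forall>m. local_gw \<xi> x x 1 m \<noteq> 0})
    = emeasure (PiM_pmf D) {\<xi>. \<forall>y<x. snd (\<xi> (y, y, 0)) \<noteq> 0}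
      * emeasure (PiM_pmf D) {\<xi>. \<forall>m. local_gw \<xi> x x 1 m \<noteq> 0}"
proof (rule emeasure_PiM_pmf_indep_Int[where A = "{i. fst i < x}"])
  show "depends_only_on {i. fst i < x} (\<lambda>\<xi>. \<xi> \<in> {\<xi>. \<forall>y<x. snd (\<xi> (y, y, 0)) \<noteq> 0})"
    by (auto simp: depends_only_on_def)
  have "depends_only_on (- {i. fst i < x}) (\<lambda>\<xi>. local_gw \<xi> x x 1 m)" for m
    by (rule depends_only_on_mono[OF _ local_gw_depends_only_on]) auto
  then show "depends_only_on (- {i. fst i < x}) (\<lambda>\<xi>. \<xi> \<in> {\<xi>. \<forall>m. local_gw \<xi> x x 1 m \<noteq> 0})"
    unfolding depends_only_on_def mem_Collect_eq by (metis (no_types, lifting))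
qed (rule sets_diagonal_moves sets_local_gw_survives)+

lemma local_survival_if_supercritical_site:
  assumes path: "\<And>y. y < x \<Longrightarrow> \<omega> y \<in> Omega" "\<And>y. y < x \<Longrightarrow> fst (\<omega> y) 0 < 1"
    and site: "\<omega> x \<in> Omega" and supercritical: "1 < stay_mean (\<omega> x)"
  shows "local_survival \<omega>"
proof -
  define D where "D i = particle_law (\<omega> (fst (snd i)))" for i :: "nat \<times> nat \<times> nat"
  interpret prob_space "PiM_pmf D" by (rule prob_space_PiM_pmf)
  have noise: "noise \<omega> = PiM_pmf D"
    unfolding D_def by (rule noise_eq_PiM_pmf)
  define E where "E = {\<xi> :: nat \<times> nat \<times> nat \<Rightarrow> nat \<times> nat. \<forall>y<x. snd (\<xi> (y, y, 0)) \<noteq> 0}"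
  define S where "S = {\<xi>. \<forall>m. local_gw \<xi> x x 1 m \<noteq> 0}"
  have events: "E \<inter> S \<in> events"
    unfolding E_def S_def by (intro sets.Int sets_diagonal_moves sets_local_gw_survives)
  have "0 < emeasure (PiM_pmf D) E"
    using emeasure_diagonal_moves_pos[of x \<omega>, OF path] unfolding noise E_def .
  moreover have "0 < emeasure (PiM_pmf D) S"
  proof -
    obtain p h where \<omega>x: "\<omega> x = (p, h)" by fastforce
    obtain u where u: "0 \<le> u" "u < 1" "stay_pgf (p, h) u \<le> u"
      using stay_pgf_le_self site supercritical unfolding \<omega>x by blast
    have "1 - u \<le> prob S"
      unfolding S_def using site u by (intro prob_local_gw_survives_ge) (auto simp: \<omega>x D_def)
    then show ?thesis
      using u(2) by (simp add: emeasure_eq_measure)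
  qed
  ultimately have "0 < emeasure (PiM_pmf D) (E \<inter> S)"
    unfolding E_def S_def emeasure_diagonal_moves_Int_local_gw_survives
    by (simp add: ennreal_zero_less_mult_iff)
  then have "0 < prob (E \<inter> S)"
    by (simp add: emeasure_eq_measure)
  moreover have "{\<xi>. \<exists>N. \<forall>n\<ge>N. eta \<xi> n x = 0} \<subseteq> space (PiM_pmf D) - E \<inter> S"
  proof
    fix \<xi> assume "\<xi> \<in> {\<xi>. \<exists>N. \<forall>n\<ge>N. eta \<xi> n x = 0}"
    then obtain N where "\<forall>n\<ge>N. eta \<xi> n x = 0" by blast
    then have "\<xi> \<notin> E \<inter> S"
      using eventually_empty_imp_local_gw_extinct[of N \<xi> x] unfolding E_def S_def by blast
    then show "\<xi> \<in> space (PiM_pmf D) - E \<inter> S" by simp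
  qed
  then have "prob {\<xi>. \<exists>N. \<forall>n\<ge>N. eta \<xi> n x = 0} \<le> prob (space (PiM_pmf D) - E \<inter> S)"
    by (intro finite_measure_mono sets.compl_sets events)
  ultimately have "prob {\<xi>. \<exists>N. \<forall>n\<ge>N. eta \<xi> n x = 0} < 1"
    using prob_compl[OF events] by simp
  then show ?thesis
    unfolding local_survival_iff noise by blast
qed

section \<open>The i.i.d. environment\<close>

lemma borel_measurable_offspring_prob [measurable]: "(\<lambda>s::site. fst s k) \<in> borel_measurable borel"
proof -
  have "continuous_on UNIV (\<lambda>s::site. fst s k)"
    using continuous_on_compose2[OF continuous_on_product_coordinates[of k] continuous_on_fst[OF continuous_on_id]]
    by auto
  then show ?thesis by (rule borel_measurable_continuous_onI)
qed

lemma borel_measurable_move_prob [measurable]: "(\<lambda>s::site. snd s) \<in> borel_measurable borel"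
  by (intro borel_measurable_continuous_onI continuous_on_snd continuous_on_id)

lemma borel_measurable_stay_mean: "stay_mean \<in> borel_measurable (borel :: site measure)"
  unfolding stay_mean_def mean_offspring_def case_prod_beta by measurable

lemma AE_env_law_all_sites:
  assumes "prob_space \<alpha>" "AE s in \<alpha>. P s"
  shows "AE \<omega> in env_law \<alpha>. \<forall>y. P (\<omega> y)"
proof -
  interpret prob_space \<alpha> by (rule assms(1))
  interpret product_prob_space "\<lambda>_. \<alpha>" "UNIV :: nat set" by unfold_locales
  show ?thesis
    unfolding env_law_def AE_all_countable using assms(2) by (intro allI AE_component) simp_all
qed

lemma AE_env_law_exists_site:
  assumes "prob_space \<alpha>" "B \<in> sets \<alpha>" "0 < emeasure \<alpha> B"
  shows "AE \<omega> in env_law \<alpha>. \<exists>y. \<omega> y \<in> B"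
proof -
  interpret A: prob_space \<alpha> by (rule assms(1))
  interpret sequence_space \<alpha> by unfold_locales
  let ?N = "Pi UNIV (\<lambda>_. space \<alpha> - B)"
  have "(\<lambda>n. \<Prod>i\<le>n. measure \<alpha> (space \<alpha> - B)) \<longlonglongrightarrow> measure S ?N"
    using assms(2) by (intro measure_PiM_countable) auto
  moreover have "(\<lambda>n. \<Prod>i\<le>n. measure \<alpha> (space \<alpha> - B)) = (\<lambda>n. (1 - measure \<alpha> B) ^ Suc n)"
    using assms(2) by (simp add: A.prob_compl)
  ultimately have "(\<lambda>n. (1 - measure \<alpha> B) ^ Suc n) \<longlonglongrightarrow> measure S ?N"
    by simp
  moreover have "(\<lambda>n. (1 - measure \<alpha> B) ^ Suc n) \<longlonglongrightarrow> 0"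
    using assms(3) A.prob_le_1[of B]
    by (intro LIMSEQ_Suc LIMSEQ_power_zero) (auto simp: A.emeasure_eq_measure)
  ultimately have "measure S ?N = 0"
    by (rule LIMSEQ_unique)
  then have "?N \<in> null_sets S"
    using assms(2) by (auto simp: P.emeasure_eq_measure null_sets_def)
  then show ?thesis
    unfolding env_law_def by (rule AE_I') (auto simp: space_PiM)
qed

lemma Lambda_eq_esssup_stay_mean: "Lambda \<alpha> = esssup \<alpha> stay_mean"
  by (simp add: Lambda_def stay_mean_def)

lemma prob_space_env_law: "prob_space \<alpha> \<Longrightarrow> prob_space (env_law \<alpha>)"
  unfolding env_law_def by (intro prob_space_PiM) simp

lemma AE_env_law_good_sites:
  assumes "prob_space \<alpha>" "0 < \<delta>"
    and "emeasure \<alpha> {(p, h) \<in> Omega. p 0 \<le> 1 - \<delta> \<and> \<delta> \<le> h \<and> h \<le> 1} = 1"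
  shows "AE \<omega> in env_law \<alpha>. \<forall>y. \<omega> y \<in> Omega \<and> fst (\<omega> y) 0 < 1"
proof -
  interpret prob_space \<alpha> by (rule assms(1))
  define G where "G = {(p, h) \<in> Omega. p 0 \<le> 1 - \<delta> \<and> \<delta> \<le> h \<and> h \<le> 1}"
  have "G \<in> sets \<alpha>"
    using assms(3) emeasure_notin_sets unfolding G_def by fastforce
  moreover have "prob G = 1"
    using assms(3) by (simp add: G_def emeasure_eq_measure)
  ultimately have "AE s in \<alpha>. s \<in> G"
    by (simp add: AE_in_set_eq_1)
  then have "AE s in \<alpha>. s \<in> Omega \<and> fst s 0 < 1"
    by (rule eventually_mono) (use assms(2) in \<open>auto simp: G_def\<close>)
  then show ?thesis
    by (rule AE_env_law_all_sites[OF assms(1)])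
qed

lemma AE_env_law_no_local_survival:
  assumes "prob_space \<alpha>" and good: "AE \<omega> in env_law \<alpha>. \<forall>y. \<omega> y \<in> Omega"
    and "Lambda \<alpha> \<le> 1"
  shows "AE \<omega> in env_law \<alpha>. \<not> local_survival \<omega>"
proof -
  have "AE s in \<alpha>. stay_mean s \<le> 1"
    using esssup_AE[of stay_mean \<alpha>] assms(3) unfolding Lambda_eq_esssup_stay_mean
    by (auto elim: eventually_mono)
  then have "AE \<omega> in env_law \<alpha>. \<forall>y. stay_mean (\<omega> y) \<le> 1"
    by (rule AE_env_law_all_sites[OF assms(1)])
  with good show ?thesis
    by eventually_elim (simp add: no_local_survival)
qed

lemma AE_env_law_local_survival:
  assumes "prob_space \<alpha>" "sets \<alpha> = sets borel"
    and good: "AE \<omega> in env_law \<alpha>. \<forall>y. \<omega> y \<in> Omega \<and> fst (\<omega> y) 0 < 1"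
    and "1 < Lambda \<alpha>"
  shows "AE \<omega> in env_law \<alpha>. local_survival \<omega>"
proof -
  have measurable: "stay_mean \<in> borel_measurable \<alpha>"
    using borel_measurable_stay_mean measurable_cong_sets[OF assms(2) refl] by blast
  define B where "B = {s \<in> space \<alpha>. 1 < stay_mean s}"
  have "B \<in> sets \<alpha>" "0 < emeasure \<alpha> B"
    unfolding B_def using measurable esssup_pos_measure[OF measurable] assms(4)
    by (auto simp: Lambda_eq_esssup_stay_mean)
  then have "AE \<omega> in env_law \<alpha>. \<exists>y. \<omega> y \<in> B"
    by (rule AE_env_law_exists_site[OF assms(1)])
  with good show ?thesis
  proof eventually_elim
    case (elim \<omega>)
    then obtain y where "\<omega> y \<in> B" by blast
    then show "local_survival \<omega>"
      using elim by (intro local_survival_if_supercritical_site[of y]) (simp_all add: B_def)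
  qed
qed

theorem theorem1:
  fixes \<alpha> :: "site measure" and \<delta> :: real
  assumes "prob_space \<alpha>"
    and "sets \<alpha> = sets borel"
    and "emeasure \<alpha> Omega = 1"
    and "\<delta> > 0"
    and "emeasure \<alpha> {(p, h) \<in> Omega. p 1 = 1} < 1"
    and "emeasure \<alpha> {(p, h) \<in> Omega. p 0 \<le> 1 - \<delta> \<and> \<delta> \<le> h \<and> h \<le> 1} = 1"
  shows "((AE \<omega> in env_law \<alpha>. local_survival \<omega>) \<or> (AE \<omega> in env_law \<alpha>. \<not> local_survival \<omega>))
    \<and> ((AE \<omega> in env_law \<alpha>. local_survival \<omega>) \<longleftrightarrow> Lambda \<alpha> > 1)"
proof -
  have good: "AE \<omega> in env_law \<alpha>. \<forall>y. \<omega> y \<in> Omega \<and> fst (\<omega> y) 0 < 1"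
    using assms(1,4,6) by (rule AE_env_law_good_sites)
  show ?thesis
  proof (cases "Lambda \<alpha> > 1")
    case True
    then show ?thesis
      using AE_env_law_local_survival[OF assms(1,2) good] by simp
  next
    case False
    interpret env: prob_space "env_law \<alpha>"
      using assms(1) by (rule prob_space_env_law)
    have no_LS: "AE \<omega> in env_law \<alpha>. \<not> local_survival \<omega>"
      using False good by (intro AE_env_law_no_local_survival assms(1)) (auto elim: eventually_mono)
    then have "\<not> (AE \<omega> in env_law \<alpha>. local_survival \<omega>)"
      using env.AE_contr by blast
    with no_LS False show ?thesis
      by simp
  qed
qed

end
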